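(* Let $A$, $Y$, $\hat{Y}$ be random variables on a common probability space, where $A$ takes values in a finite set $\mathcal{A}$ and $Y,\hat{Y}$ take values in a finite set $\mathcal{Y}$. Identify each element of a finite value set with its one-hot vector, use the $\ell_p$-norm $\|\cdot\|_p$ ($p\ge 1$) as ground metric, and for pairs use the $\ell_p$-norm of the concatenated one-hot vectors. For $a\in\mathcal{A}$, $y\in\mathcal{Y}$ let $$\mathbf{DP}_{a,y}=\mathbb{P}(\hat{Y}=y\mid A=a)-\mathbb{P}(\hat{Y}=y),\qquad \mathbf{EO}_{a,y}=\mathbb{P}(\hat{Y}=Y\mid Y=y,A=a)-\mathbb{P}(\hat{Y}=Y\mid Y=y).$$ Then $$I_W(\hat{Y},A)=\frac{\sqrt[p]{2}}{2}\sum_{a\in\mathcal{A}}\mathbb{P}(A=a)\sum_{y\in\mathcal{Y}}\left|\mathbf{DP}_{a,y}\right|,$$ and, for every $y\in\mathcal{Y}$, $$I_W\big((\hat{Y}=Y)\mid Y=y,\;A\mid Y=y\big)=\sqrt[p]{2}\sum_{a\in\mathcal{A}}\mathbb{P}(A=a\mid Y=y)\left|\mathbf{EO}_{a,y}\right|.$$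
   Context: For random variables $U,V$, the Wasserstein Dependency Measure is $I_W(U,V)=W_1(p(U,V),p(U)p(V))$, where $W_1$ is the 1-Wasserstein (earth mover's) distance with respect to the ground metric, $p(U,V)$ is the joint law and $p(U)p(V)$ the product of the marginal laws. The quantity $I_W((\hat{Y}=Y)\mid Y=y, A\mid Y=y)$ denotes $W_1$ between the joint law of the binary indicator $\mathbb{1}[\hat{Y}=Y]$ and $A$ conditionally on $Y=y$, and the product of their conditional marginals given $Y=y$ (the binary indicator also being one-hot encoded). With one-hot encoding and the $\ell_p$ ground metric, two distinct values of the same variable are at distance $\sqrt[p]{2}$. *)

theory Defs
  imports "HOL-Probability.Probability"
begin

text \<open>One-hot encoding of an element v of a finite value set, as a real vector
  indexed by the value set (coordinates outside the value set are irrelevant).\<close>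
definition onehot :: "'x \<Rightarrow> 'x \<Rightarrow> real" where
  "onehot v = (\<lambda>i. if i = v then 1 else 0)"

definition onehot_pair :: "'x \<times> 'z \<Rightarrow> ('x + 'z) \<Rightarrow> real" where
  "onehot_pair u = case_sum (onehot (fst u)) (onehot (snd u))"

definition lp_dist :: "'i set \<Rightarrow> real \<Rightarrow> ('i \<Rightarrow> real) \<Rightarrow> ('i \<Rightarrow> real) \<Rightarrow> real" where
  "lp_dist I p f g = (\<Sum>i\<in>I. \<bar>f i - g i\<bar> powr p) powr (1 / p)"

definition coupling :: "'x set \<Rightarrow> ('x \<Rightarrow> real) \<Rightarrow> ('x \<Rightarrow> real) \<Rightarrow> ('x \<times> 'x \<Rightarrow> real) \<Rightarrow> bool" where
  "coupling X P Q \<gamma> \<longleftrightarrow>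
     (\<forall>z. \<gamma> z \<ge> 0) \<and> (\<forall>z. z \<notin> X \<times> X \<longrightarrow> \<gamma> z = 0) \<and>
     (\<forall>u\<in>X. (\<Sum>v\<in>X. \<gamma> (u, v)) = P u) \<and>
     (\<forall>v\<in>X. (\<Sum>u\<in>X. \<gamma> (u, v)) = Q v)"

definition W1 :: "'x set \<Rightarrow> ('x \<Rightarrow> 'x \<Rightarrow> real) \<Rightarrow> ('x \<Rightarrow> real) \<Rightarrow> ('x \<Rightarrow> real) \<Rightarrow> real" where
  "W1 X d P Q = Inf {(\<Sum>z\<in>X \<times> X. \<gamma> z * d (fst z) (snd z)) | \<gamma>. coupling X P Q \<gamma>}"

definition pair_metric :: "'x set \<Rightarrow> 'z set \<Rightarrow> real \<Rightarrow> 'x \<times> 'z \<Rightarrow> 'x \<times> 'z \<Rightarrow> real" where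
  "pair_metric Xs Zs p u v = lp_dist (Xs <+> Zs) p (onehot_pair u) (onehot_pair v)"

definition IW :: "'w measure \<Rightarrow> real \<Rightarrow> 'x set \<Rightarrow> 'z set \<Rightarrow> ('w \<Rightarrow> 'x) \<Rightarrow> ('w \<Rightarrow> 'z) \<Rightarrow> real" where
  "IW M p Us Vs U V =
     W1 (Us \<times> Vs) (pair_metric Us Vs p)
        (\<lambda>(u, v). \<P>(w in M. U w = u \<and> V w = v))
        (\<lambda>(u, v). \<P>(w in M. U w = u) * \<P>(w in M. V w = v))"

definition IW_cond :: "'w measure \<Rightarrow> real \<Rightarrow> 'x set \<Rightarrow> 'z set \<Rightarrow> ('w \<Rightarrow> 'x) \<Rightarrow> ('w \<Rightarrow> 'z) \<Rightarrow> ('w \<Rightarrow> bool) \<Rightarrow> real" where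
  "IW_cond M p Us Vs U V C =
     W1 (Us \<times> Vs) (pair_metric Us Vs p)
        (\<lambda>(u, v). \<P>(w in M. U w = u \<and> V w = v \<bar> C w))
        (\<lambda>(u, v). \<P>(w in M. U w = u \<bar> C w) * \<P>(w in M. V w = v \<bar> C w))"

end

theory Submission
  imports Defs
begin

(* Under one-hot encodings two distinct pairs are at l_p distance 2^(1/p) if they differ in one
   coordinate and 4^(1/p) if they differ in both. The joint law P and the product law Q of (U, V)
   have the same V-marginal, so mass only has to move inside the slices U x {v}: keeping min(P, Q)
   in place and spreading each slice's surplus proportionally over the same slice's deficit costs
   2^(1/p) times the total surplus, i.e. 2^(1/p)/2 * |P - Q|_1. No coupling is cheaper, since every
   unit that moves costs at least 2^(1/p) and at least half of |P - Q|_1 has to move. Then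
   P(u, v) - Q(u, v) = P(V = v) (P(U = u | V = v) - P(U = u)) gives the first formula. The
   conditional dependency measure is the unconditional one under the probability measure
   conditioned on Y = y, and for a binary U the deviations of the values True and False coincide,
   whence the factor 2. *)

lemma sum_abs_onehot_diff_powr:
  assumes "finite S" "u \<in> S" "u' \<in> S" "p > 0"
  shows "(\<Sum>i\<in>S. \<bar>onehot u i - onehot u' i\<bar> powr p) = (if u = u' then 0 else 2)"
proof (cases "u = u'")
  case False
  then have "(\<Sum>i\<in>S. \<bar>onehot u i - onehot u' i\<bar> powr p)
      = (\<Sum>i\<in>S. (if i = u then 1 else 0) + (if i = u' then 1 else 0))"
    by (intro sum.cong) (auto simp: onehot_def)
  with False assms show ?thesis by (simp add: sum.distrib)
qed (simp add: onehot_def)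

lemma pair_metric_Pair:
  assumes "finite Us" "finite Vs" "u \<in> Us" "u' \<in> Us" "v \<in> Vs" "v' \<in> Vs" "p > 0"
  shows "pair_metric Us Vs p (u, v) (u', v') =
     ((if u = u' then 0 else 2) + (if v = v' then 0 else 2)) powr (1 / p)"
  using assms by (simp add: pair_metric_def lp_dist_def sum.Plus o_def onehot_pair_def
      sum_abs_onehot_diff_powr)

lemma pair_metric_self:
  assumes "finite Us" "finite Vs" "z \<in> Us \<times> Vs" "p > 0"
  shows "pair_metric Us Vs p z z = 0"
  using assms pair_metric_Pair[of Us Vs "fst z" "fst z" "snd z" "snd z" p] by auto

lemma pair_metric_ge:
  assumes "finite Us" "finite Vs" "z \<in> Us \<times> Vs" "w \<in> Us \<times> Vs" "z \<noteq> w" "p > 0"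
  shows "2 powr (1 / p) \<le> pair_metric Us Vs p z w"
proof -
  obtain u v u' v' where z: "z = (u, v)" and w: "w = (u', v')" by (cases z, cases w) auto
  have "2 \<le> (if u = u' then 0 else 2) + (if v = v' then 0 else 2 :: real)"
    using assms z w by auto
  with assms z w show ?thesis
    by (simp add: pair_metric_Pair powr_mono2)
qed

lemma pair_metric_same_snd:
  assumes "finite Us" "finite Vs" "z \<in> Us \<times> Vs" "w \<in> Us \<times> Vs" "z \<noteq> w" "snd z = snd w" "p > 0"
  shows "pair_metric Us Vs p z w = 2 powr (1 / p)"
  using assms pair_metric_Pair[of Us Vs "fst z" "fst w" "snd z" "snd w" p]
  by (auto simp: prod_eq_iff)

definition transport_cost :: "'x set \<Rightarrow> ('x \<Rightarrow> 'x \<Rightarrow> real) \<Rightarrow> ('x \<times> 'x \<Rightarrow> real) \<Rightarrow> real" where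
  "transport_cost X d \<gamma> = (\<Sum>z\<in>X. \<Sum>w\<in>X. \<gamma> (z, w) * d z w)"

lemma W1_eq_Inf_transport_cost:
  "W1 X d P Q = Inf {transport_cost X d \<gamma> | \<gamma>. coupling X P Q \<gamma>}"
  by (simp add: W1_def transport_cost_def sum.cartesian_product case_prod_beta)

definition off_diagonal_mass :: "'x set \<Rightarrow> ('x \<times> 'x \<Rightarrow> real) \<Rightarrow> real" where
  "off_diagonal_mass X \<gamma> = (\<Sum>z\<in>X. \<Sum>w\<in>X. if z = w then 0 else \<gamma> (z, w))"

lemma sum_eq_diagonal_add_off_diagonal:
  assumes "finite X" "z \<in> X"
  shows "(\<Sum>w\<in>X. f w) = f z + (\<Sum>w\<in>X. if z = w then 0 else f w :: real)"
proof -
  have "(\<Sum>w\<in>X. f w) = (\<Sum>w\<in>X. (if z = w then f w else 0) + (if z = w then 0 else f w))"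
    by (intro sum.cong) auto
  with assms show ?thesis by (simp add: sum.distrib)
qed

lemma coupling_sum_abs_diff_le_off_diagonal_mass:
  assumes "finite X" "coupling X P Q \<gamma>"
  shows "(\<Sum>z\<in>X. \<bar>P z - Q z\<bar>) \<le> 2 * off_diagonal_mass X \<gamma>"
proof -
  have nonneg: "\<And>z. \<gamma> z \<ge> 0"
    and rows: "\<And>z. z \<in> X \<Longrightarrow> P z = (\<Sum>w\<in>X. \<gamma> (z, w))"
    and cols: "\<And>z. z \<in> X \<Longrightarrow> Q z = (\<Sum>w\<in>X. \<gamma> (w, z))"
    using assms(2) by (auto simp: coupling_def)
  have "\<bar>P z - Q z\<bar> \<le> (\<Sum>w\<in>X. if z = w then 0 else \<gamma> (z, w)) + (\<Sum>w\<in>X. if w = z then 0 else \<gamma> (w, z))"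
    (is "_ \<le> ?out + ?in") if "z \<in> X" for z
  proof -
    have "P z = \<gamma> (z, z) + ?out" "Q z = \<gamma> (z, z) + ?in"
      using that rows[of z] cols[of z] assms(1)
        sum_eq_diagonal_add_off_diagonal[of X z "\<lambda>w. \<gamma> (z, w)"]
        sum_eq_diagonal_add_off_diagonal[of X z "\<lambda>w. \<gamma> (w, z)"]
      by (simp_all add: eq_commute[of z])
    moreover have "?out \<ge> 0" "?in \<ge> 0"
      by (simp_all add: nonneg sum_nonneg)
    ultimately show ?thesis by linarith
  qed
  then have "(\<Sum>z\<in>X. \<bar>P z - Q z\<bar>) \<le> off_diagonal_mass X \<gamma> + (\<Sum>z\<in>X. \<Sum>w\<in>X. if w = z then 0 else \<gamma> (w, z))"
    by (simp add: off_diagonal_mass_def sum.distrib[symmetric] sum_mono)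
  also have "(\<Sum>z\<in>X. \<Sum>w\<in>X. if w = z then 0 else \<gamma> (w, z)) = off_diagonal_mass X \<gamma>"
    unfolding off_diagonal_mass_def by (rule sum.swap)
  finally show ?thesis by simp
qed

lemma transport_cost_ge_off_diagonal_mass:
  assumes "\<And>z. \<gamma> z \<ge> 0" "\<And>z. z \<in> X \<Longrightarrow> 0 \<le> d z z"
    and "\<And>z w. z \<in> X \<Longrightarrow> w \<in> X \<Longrightarrow> z \<noteq> w \<Longrightarrow> c \<le> d z w"
  shows "c * off_diagonal_mass X \<gamma> \<le> transport_cost X d \<gamma>"
  unfolding off_diagonal_mass_def transport_cost_def sum_distrib_left
  using assms by (intro sum_mono) (auto simp: mult.commute[of c] intro!: mult_left_mono)

definition surplus :: "('x \<Rightarrow> real) \<Rightarrow> ('x \<Rightarrow> real) \<Rightarrow> 'x \<Rightarrow> real" where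
  "surplus P Q z = max (P z - Q z) 0"

lemma surplus_nonneg: "0 \<le> surplus P Q z"
  by (simp add: surplus_def)

lemma abs_diff_eq_surplus_add_surplus: "\<bar>P z - Q z\<bar> = surplus P Q z + surplus Q P z"
  by (simp add: surplus_def)

lemma min_add_surplus: "min (P z) (Q z) + surplus P Q z = P z"
  by (simp add: surplus_def)

lemma surplus_mult_surplus_swap: "surplus P Q z * surplus Q P z = 0"
  by (simp add: surplus_def max_def)

lemma sum_surplus_swap:
  assumes "(\<Sum>x\<in>S. P x) = (\<Sum>x\<in>S. Q x)"
  shows "(\<Sum>x\<in>S. surplus Q P x) = (\<Sum>x\<in>S. surplus P Q x)"
proof -
  have "(\<Sum>x\<in>S. surplus P Q x) - (\<Sum>x\<in>S. surplus Q P x) = (\<Sum>x\<in>S. P x) - (\<Sum>x\<in>S. Q x)"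
    unfolding sum_subtractf[symmetric] by (rule sum.cong) (auto simp: surplus_def)
  with assms show ?thesis by simp
qed

lemma sum_abs_diff_eq_twice_sum_surplus:
  assumes "(\<Sum>x\<in>S. P x) = (\<Sum>x\<in>S. Q x)"
  shows "(\<Sum>x\<in>S. \<bar>P x - Q x\<bar>) = 2 * (\<Sum>x\<in>S. surplus Q P x)"
  using sum_surplus_swap[OF assms]
  by (simp add: abs_diff_eq_surplus_add_surplus sum.distrib)

definition balanced_slices :: "'u set \<Rightarrow> 'v set \<Rightarrow> ('u \<times> 'v \<Rightarrow> real) \<Rightarrow> ('u \<times> 'v \<Rightarrow> real) \<Rightarrow> bool" where
  "balanced_slices Us Vs P Q \<longleftrightarrow> (\<forall>v\<in>Vs. (\<Sum>u\<in>Us. P (u, v)) = (\<Sum>u\<in>Us. Q (u, v)))"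

lemma balanced_slices_swap: "balanced_slices Us Vs Q P = balanced_slices Us Vs P Q"
  by (auto simp: balanced_slices_def)

lemma balanced_slices_sum_eq:
  assumes "balanced_slices Us Vs P Q"
  shows "(\<Sum>z\<in>Us \<times> Vs. P z) = (\<Sum>z\<in>Us \<times> Vs. Q z)"
proof -
  have "(\<Sum>z\<in>Us \<times> Vs. P z) = (\<Sum>v\<in>Vs. \<Sum>u\<in>Us. P (u, v))" for P :: "_ \<Rightarrow> real"
    by (subst sum.swap) (simp add: sum.cartesian_product case_prod_beta)
  with assms show ?thesis by (simp add: balanced_slices_def)
qed

(* The denominator is twice the surplus of the slice of z (for balanced slices); if P = Q on that
   slice it is 0 and the convention x / 0 = 0 makes the transfer vanish. *)
definition slice_transfer :: "'u set \<Rightarrow> ('u \<times> 'v \<Rightarrow> real) \<Rightarrow> ('u \<times> 'v \<Rightarrow> real) \<Rightarrow> 'u \<times> 'v \<Rightarrow> 'u \<times> 'v \<Rightarrow> real" where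
  "slice_transfer Us P Q z w =
     (if snd z = snd w
      then 2 * surplus P Q z * surplus Q P w / (\<Sum>u\<in>Us. \<bar>P (u, snd z) - Q (u, snd z)\<bar>)
      else 0)"

definition slice_plan :: "'u set \<Rightarrow> 'v set \<Rightarrow> ('u \<times> 'v \<Rightarrow> real) \<Rightarrow> ('u \<times> 'v \<Rightarrow> real) \<Rightarrow> ('u \<times> 'v) \<times> ('u \<times> 'v) \<Rightarrow> real" where
  "slice_plan Us Vs P Q = (\<lambda>(z, w).
     if z \<in> Us \<times> Vs \<and> w \<in> Us \<times> Vs
     then (if z = w then min (P z) (Q z) else 0) + slice_transfer Us P Q z w
     else 0)"

lemma slice_transfer_swap: "slice_transfer Us Q P w z = slice_transfer Us P Q z w"
  by (simp add: slice_transfer_def abs_minus_commute mult.commute mult.left_commute)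

lemma slice_plan_swap: "slice_plan Us Vs Q P (w, z) = slice_plan Us Vs P Q (z, w)"
  by (auto simp: slice_plan_def slice_transfer_swap min.commute)

lemma slice_transfer_nonneg: "0 \<le> slice_transfer Us P Q z w"
  by (simp add: slice_transfer_def surplus_nonneg sum_nonneg)

lemma slice_transfer_self: "slice_transfer Us P Q z z = 0"
  by (simp add: slice_transfer_def mult.assoc surplus_mult_surplus_swap)

lemma sum_slice_transfer:
  assumes "finite Us" "finite Vs" "balanced_slices Us Vs P Q" "z \<in> Us \<times> Vs"
  shows "(\<Sum>w\<in>Us \<times> Vs. slice_transfer Us P Q z w) = surplus P Q z"
proof -
  obtain u v where z: "z = (u, v)" and "u \<in> Us" "v \<in> Vs" using assms(4) by auto
  define deficit where "deficit = (\<Sum>u'\<in>Us. surplus Q P (u', v))"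
  have balanced: "(\<Sum>u'\<in>Us. P (u', v)) = (\<Sum>u'\<in>Us. Q (u', v))"
    using assms(3) \<open>v \<in> Vs\<close> by (simp add: balanced_slices_def)
  have deficit_eq: "deficit = (\<Sum>u'\<in>Us. surplus P Q (u', v))"
    using sum_surplus_swap[OF balanced] by (simp add: deficit_def surplus_def)
  have slice_abs: "(\<Sum>u'\<in>Us. \<bar>P (u', v) - Q (u', v)\<bar>) = 2 * deficit"
    using sum_abs_diff_eq_twice_sum_surplus[OF balanced] by (simp add: deficit_def surplus_def)
  have "(\<Sum>w\<in>Us \<times> Vs. slice_transfer Us P Q z w) = (\<Sum>u'\<in>Us. \<Sum>v'\<in>Vs. slice_transfer Us P Q z (u', v'))"
    by (simp add: sum.cartesian_product case_prod_beta)
  also have "\<dots> = (\<Sum>u'\<in>Us. \<Sum>v'\<in>Vs. if v' = v then surplus P Q z * surplus Q P (u', v) / deficit else 0)"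
    by (intro sum.cong refl) (auto simp: slice_transfer_def z slice_abs)
  also have "\<dots> = surplus P Q z * deficit / deficit"
    using assms(2) \<open>v \<in> Vs\<close> by (simp add: deficit_def sum_divide_distrib sum_distrib_left)
  also have "\<dots> = surplus P Q z"
  proof (cases "deficit = 0")
    case True
    have "surplus P Q z \<le> deficit"
      unfolding deficit_eq z using assms(1) \<open>u \<in> Us\<close>
      by (intro member_le_sum) (auto simp: surplus_nonneg)
    with True surplus_nonneg[of P Q z] show ?thesis by simp
  qed simp
  finally show ?thesis .
qed

lemma sum_slice_plan_row:
  assumes "finite Us" "finite Vs" "balanced_slices Us Vs P Q" "z \<in> Us \<times> Vs"
  shows "(\<Sum>w\<in>Us \<times> Vs. slice_plan Us Vs P Q (z, w)) = P z"
proof -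
  have "(\<Sum>w\<in>Us \<times> Vs. slice_plan Us Vs P Q (z, w))
      = (\<Sum>w\<in>Us \<times> Vs. (if z = w then min (P z) (Q z) else 0) + slice_transfer Us P Q z w)"
    using assms(4) by (intro sum.cong) (auto simp: slice_plan_def)
  also have "\<dots> = min (P z) (Q z) + surplus P Q z"
    using assms by (simp add: sum.distrib sum_slice_transfer)
  finally show ?thesis by (simp add: min_add_surplus)
qed

lemma coupling_slice_plan:
  assumes "finite Us" "finite Vs" "balanced_slices Us Vs P Q"
    and "\<And>z. z \<in> Us \<times> Vs \<Longrightarrow> 0 \<le> P z" "\<And>z. z \<in> Us \<times> Vs \<Longrightarrow> 0 \<le> Q z"
  shows "coupling (Us \<times> Vs) P Q (slice_plan Us Vs P Q)"
  unfolding coupling_def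
proof (intro conjI allI ballI impI)
  fix zw show "0 \<le> slice_plan Us Vs P Q zw"
    using assms(4,5) by (cases zw) (auto simp: slice_plan_def slice_transfer_nonneg)
next
  fix zw assume "zw \<notin> (Us \<times> Vs) \<times> (Us \<times> Vs)"
  then show "slice_plan Us Vs P Q zw = 0" by (cases zw) (auto simp: slice_plan_def)
next
  fix z assume "z \<in> Us \<times> Vs"
  then show "(\<Sum>w\<in>Us \<times> Vs. slice_plan Us Vs P Q (z, w)) = P z"
    using assms(1-3) by (rule sum_slice_plan_row[rotated 3])
next
  fix w assume "w \<in> Us \<times> Vs"
  then show "(\<Sum>z\<in>Us \<times> Vs. slice_plan Us Vs P Q (z, w)) = Q w"
    using assms(1-3) sum_slice_plan_row[of Us Vs Q P w]
    by (simp add: slice_plan_swap balanced_slices_swap)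
qed

lemma transport_cost_slice_plan:
  assumes "finite Us" "finite Vs" "balanced_slices Us Vs P Q"
    and "\<And>z. z \<in> Us \<times> Vs \<Longrightarrow> d z z = 0"
    and "\<And>z w. z \<in> Us \<times> Vs \<Longrightarrow> w \<in> Us \<times> Vs \<Longrightarrow> z \<noteq> w \<Longrightarrow> snd z = snd w \<Longrightarrow> d z w = c"
  shows "transport_cost (Us \<times> Vs) d (slice_plan Us Vs P Q) = c / 2 * (\<Sum>z\<in>Us \<times> Vs. \<bar>P z - Q z\<bar>)"
proof -
  have "transport_cost (Us \<times> Vs) d (slice_plan Us Vs P Q)
      = (\<Sum>z\<in>Us \<times> Vs. \<Sum>w\<in>Us \<times> Vs. c * slice_transfer Us P Q z w)"
    unfolding transport_cost_def
  proof (intro sum.cong refl)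
    fix z w assume "z \<in> Us \<times> Vs" "w \<in> Us \<times> Vs"
    then show "slice_plan Us Vs P Q (z, w) * d z w = c * slice_transfer Us P Q z w"
      using assms(4) assms(5)[of z w]
      by (cases "z = w") (auto simp: slice_plan_def slice_transfer_self slice_transfer_def)
  qed
  also have "\<dots> = c * (\<Sum>z\<in>Us \<times> Vs. surplus P Q z)"
    using assms(1-3) by (simp add: sum_distrib_left[symmetric] sum_slice_transfer)
  also have "\<dots> = c / 2 * (\<Sum>z\<in>Us \<times> Vs. \<bar>P z - Q z\<bar>)"
    using sum_abs_diff_eq_twice_sum_surplus[where S="Us \<times> Vs" and P=Q and Q=P] balanced_slices_sum_eq[OF assms(3)]
    by (simp add: abs_minus_commute)
  finally show ?thesis .
qed

lemma W1_pair_metric_eq: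
  assumes "finite Us" "finite Vs" "p > 0" "balanced_slices Us Vs P Q"
    and "\<And>z. z \<in> Us \<times> Vs \<Longrightarrow> 0 \<le> P z" "\<And>z. z \<in> Us \<times> Vs \<Longrightarrow> 0 \<le> Q z"
  shows "W1 (Us \<times> Vs) (pair_metric Us Vs p) P Q = 2 powr (1 / p) / 2 * (\<Sum>z\<in>Us \<times> Vs. \<bar>P z - Q z\<bar>)"
  unfolding W1_eq_Inf_transport_cost
proof (rule cInf_eq_minimum)
  show "2 powr (1 / p) / 2 * (\<Sum>z\<in>Us \<times> Vs. \<bar>P z - Q z\<bar>)
      \<in> {transport_cost (Us \<times> Vs) (pair_metric Us Vs p) \<gamma> | \<gamma>. coupling (Us \<times> Vs) P Q \<gamma>}"
  proof (intro CollectI exI conjI)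
    show "coupling (Us \<times> Vs) P Q (slice_plan Us Vs P Q)"
      using assms by (intro coupling_slice_plan)
    show "2 powr (1 / p) / 2 * (\<Sum>z\<in>Us \<times> Vs. \<bar>P z - Q z\<bar>)
        = transport_cost (Us \<times> Vs) (pair_metric Us Vs p) (slice_plan Us Vs P Q)"
      using assms by (intro transport_cost_slice_plan[symmetric]) (auto simp: pair_metric_self pair_metric_same_snd)
  qed
next
  fix x assume "x \<in> {transport_cost (Us \<times> Vs) (pair_metric Us Vs p) \<gamma> | \<gamma>. coupling (Us \<times> Vs) P Q \<gamma>}"
  then obtain \<gamma> where \<gamma>: "coupling (Us \<times> Vs) P Q \<gamma>"
    and x: "x = transport_cost (Us \<times> Vs) (pair_metric Us Vs p) \<gamma>" by blast
  have "2 powr (1 / p) / 2 * (\<Sum>z\<in>Us \<times> Vs. \<bar>P z - Q z\<bar>) \<le> 2 powr (1 / p) * off_diagonal_mass (Us \<times> Vs) \<gamma>"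
    using coupling_sum_abs_diff_le_off_diagonal_mass[OF _ \<gamma>] assms(1,2) by simp
  also have "\<dots> \<le> x"
    unfolding x using \<gamma> assms(1-3)
    by (intro transport_cost_ge_off_diagonal_mass) (auto simp: coupling_def pair_metric_self pair_metric_ge)
  finally show "2 powr (1 / p) / 2 * (\<Sum>z\<in>Us \<times> Vs. \<bar>P z - Q z\<bar>) \<le> x" .
qed

lemma pred_eq_finite_valued:
  assumes "finite S" "X \<in> measurable M (count_space S)" "Z \<in> measurable M (count_space S)"
  shows "Measurable.pred M (\<lambda>w. X w = Z w)"
proof -
  have [measurable]: "Measurable.pred M (\<lambda>w. X w = s)" "Measurable.pred M (\<lambda>w. Z w = s)" for s
    using assms(2,3) by (auto intro: pred_eq_const1)
  have "Measurable.pred M (\<lambda>w. \<exists>s\<in>S. X w = s \<and> Z w = s)"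
    using assms(1) by measurable
  moreover have "w \<in> space M \<Longrightarrow> (\<exists>s\<in>S. X w = s \<and> Z w = s) \<longleftrightarrow> X w = Z w" for w
    using measurable_space[OF assms(2)] by auto
  ultimately show ?thesis by (simp cong: measurable_cong)
qed

context prob_space
begin

lemma sum_prob_conj_eq:
  assumes "finite S" "U \<in> measurable M (count_space S)" "Measurable.pred M E"
  shows "(\<Sum>s\<in>S. \<P>(w in M. U w = s \<and> E w)) = \<P>(w in M. E w)"
  using assms measurable_space[OF assms(2)]
  by (intro prob_sum[symmetric]) (auto intro!: AE_I2 pred_eq_const1)

lemma prob_mult_abs_cond_prob_diff:
  assumes "Measurable.pred M E" "Measurable.pred M F"
  shows "\<P>(w in M. F w) * \<bar>\<P>(w in M. E w \<bar> F w) - q\<bar> = \<bar>\<P>(w in M. E w \<and> F w) - q * \<P>(w in M. F w)\<bar>"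
proof (cases "\<P>(w in M. F w) = 0")
  case True
  have "\<P>(w in M. E w \<and> F w) \<le> \<P>(w in M. F w)"
    using assms by (intro finite_measure_mono) auto
  with True show ?thesis by (simp add: cond_prob_def measure_nonneg order_antisym)
next
  case False
  then have "\<P>(w in M. F w) * \<bar>\<P>(w in M. E w \<bar> F w) - q\<bar>
      = \<bar>\<P>(w in M. F w) * (\<P>(w in M. E w \<bar> F w) - q)\<bar>"
    by (simp add: abs_mult measure_nonneg)
  with False show ?thesis by (simp add: cond_prob_def right_diff_distrib mult.commute)
qed

lemma prob_mult_cond_prob_compl_deviation:
  assumes [measurable]: "Measurable.pred M E" "Measurable.pred M F"
  shows "\<P>(w in M. F w) * \<bar>\<P>(w in M. \<not> E w \<bar> F w) - \<P>(w in M. \<not> E w)\<bar>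
       = \<P>(w in M. F w) * \<bar>\<P>(w in M. E w \<bar> F w) - \<P>(w in M. E w)\<bar>"
proof -
  have conj: "\<P>(w in M. \<not> E w \<and> F w) = \<P>(w in M. F w) - \<P>(w in M. E w \<and> F w)"
    using sum_prob_conj_eq[of UNIV E F, OF _ assms] by (simp add: UNIV_bool)
  have compl: "\<P>(w in M. \<not> E w) = 1 - \<P>(w in M. E w)"
    by (simp add: prob_neg)
  have "\<P>(w in M. \<not> E w \<and> F w) - \<P>(w in M. \<not> E w) * \<P>(w in M. F w)
      = - (\<P>(w in M. E w \<and> F w) - \<P>(w in M. E w) * \<P>(w in M. F w))"
    by (simp only: conj compl) (simp add: algebra_simps)
  then show ?thesis
    by (simp only: prob_mult_abs_cond_prob_diff assms pred_intros_logic abs_minus_cancel)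
qed

lemma IW_eq_weighted_cond_deviation:
  assumes "finite Us" "finite Vs" "p > 0"
    and "U \<in> measurable M (count_space Us)" "V \<in> measurable M (count_space Vs)"
  shows "IW M p Us Vs U V = 2 powr (1 / p) / 2 *
           (\<Sum>v\<in>Vs. \<P>(w in M. V w = v) *
              (\<Sum>u\<in>Us. \<bar>\<P>(w in M. U w = u \<bar> V w = v) - \<P>(w in M. U w = u)\<bar>))"
proof -
  have [measurable]: "Measurable.pred M (\<lambda>w. U w = u)" "Measurable.pred M (\<lambda>w. V w = v)" for u v
    using assms(4,5) by (auto intro: pred_eq_const1)
  define P where "P = (\<lambda>(u, v). \<P>(w in M. U w = u \<and> V w = v))"
  define Q where "Q = (\<lambda>(u, v). \<P>(w in M. U w = u) * \<P>(w in M. V w = v))"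
  have "(\<Sum>u\<in>Us. \<P>(w in M. U w = u)) = 1"
    using sum_prob_conj_eq[OF assms(1,4), of "\<lambda>_. True"] by (simp add: prob_space)
  then have "balanced_slices Us Vs P Q"
    by (simp add: balanced_slices_def P_def Q_def sum_distrib_right[symmetric] sum_prob_conj_eq[OF assms(1,4)])
  then have "IW M p Us Vs U V = 2 powr (1 / p) / 2 * (\<Sum>z\<in>Us \<times> Vs. \<bar>P z - Q z\<bar>)"
    unfolding IW_def P_def[symmetric] Q_def[symmetric] using assms(1-3)
    by (intro W1_pair_metric_eq) (auto simp: P_def Q_def)
  also have "(\<Sum>z\<in>Us \<times> Vs. \<bar>P z - Q z\<bar>) = (\<Sum>v\<in>Vs. \<Sum>u\<in>Us. \<bar>P (u, v) - Q (u, v)\<bar>)"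
    by (subst sum.swap) (simp add: sum.cartesian_product case_prod_beta)
  also have "\<dots> = (\<Sum>v\<in>Vs. \<P>(w in M. V w = v) *
              (\<Sum>u\<in>Us. \<bar>\<P>(w in M. U w = u \<bar> V w = v) - \<P>(w in M. U w = u)\<bar>))"
    by (simp add: sum_distrib_left prob_mult_abs_cond_prob_diff P_def Q_def)
  finally show ?thesis .
qed

lemma IW_cond_eq_IW_uniform_measure:
  assumes "U \<in> measurable M (count_space Us)" "V \<in> measurable M (count_space Vs)"
    and "Measurable.pred M C"
  shows "IW_cond M p Us Vs U V C = IW (uniform_measure M {w \<in> space M. C w}) p Us Vs U V"
proof -
  have [measurable]: "Measurable.pred M (\<lambda>w. U w = u)" "Measurable.pred M (\<lambda>w. V w = v)" for u v
    using assms(1,2) by (auto intro: pred_eq_const1)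
  show ?thesis
    using assms(3)
    by (simp add: IW_cond_def IW_def measure_uniform_measure_eq_cond_prob del: space_uniform_measure)
qed

lemma cond_prob_uniform_measure:
  assumes [measurable]: "Measurable.pred M E" "Measurable.pred M F" "Measurable.pred M C"
  shows "\<P>(w in uniform_measure M {w \<in> space M. C w}. E w \<bar> F w) = \<P>(w in M. E w \<bar> C w \<and> F w)"
proof -
  have "\<P>(w in uniform_measure M {w \<in> space M. C w}. E w \<bar> F w)
      = \<P>(w in M. E w \<and> F w \<bar> C w) / \<P>(w in M. F w \<bar> C w)"
    by (simp add: cond_prob_def[of "uniform_measure _ _"] measure_uniform_measure_eq_cond_prob
        del: space_uniform_measure)
  also have "\<dots> = \<P>(w in M. E w \<and> C w \<and> F w) / \<P>(w in M. C w) / (\<P>(w in M. C w \<and> F w) / \<P>(w in M. C w))"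
    by (simp add: cond_prob_def conj_ac)
  also have "\<dots> = \<P>(w in M. E w \<bar> C w \<and> F w)"
  proof (cases "\<P>(w in M. C w) = 0")
    case True
    have "\<P>(w in M. E w \<and> C w \<and> F w) \<le> \<P>(w in M. C w)"
      by (intro finite_measure_mono) auto
    with True show ?thesis by (simp add: cond_prob_def measure_nonneg order_antisym)
  qed (simp add: cond_prob_def)
  finally show ?thesis .
qed

lemma IW_cond_bool_eq_weighted_cond_deviation:
  assumes "finite Vs" "p > 0"
    and "Measurable.pred M B" "V \<in> measurable M (count_space Vs)" "Measurable.pred M C"
    and "\<P>(w in M. C w) > 0"
  shows "IW_cond M p UNIV Vs B V C = 2 powr (1 / p) *
           (\<Sum>v\<in>Vs. \<P>(w in M. V w = v \<bar> C w) *
              \<bar>\<P>(w in M. B w \<bar> C w \<and> V w = v) - \<P>(w in M. B w \<bar> C w)\<bar>)"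
proof -
  have [measurable]: "Measurable.pred M (\<lambda>w. V w = v)" for v
    using assms(4) by (auto intro: pred_eq_const1)
  define N where "N = uniform_measure M {w \<in> space M. C w}"
  interpret N: prob_space N
    unfolding N_def using assms(5,6)
    by (intro prob_space_uniform_measure) (auto simp: emeasure_eq_measure)
  have measurable_N: "measurable N X = measurable M X" for X
    by (rule measurable_cong_sets) (simp_all add: N_def)
  have pred_N [measurable]: "Measurable.pred N B" "Measurable.pred N (\<lambda>w. V w = v)" for v
    using assms(3) by (simp_all add: measurable_N)
  have "IW_cond M p UNIV Vs B V C = IW N p UNIV Vs B V"
    unfolding N_def using assms(3-5) by (intro IW_cond_eq_IW_uniform_measure) auto
  also have "\<dots> = 2 powr (1 / p) / 2 *
           (\<Sum>v\<in>Vs. \<P>(w in N. V w = v) *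
              (\<Sum>b\<in>UNIV. \<bar>\<P>(w in N. B w = b \<bar> V w = v) - \<P>(w in N. B w = b)\<bar>))"
    using assms(1-4) by (intro N.IW_eq_weighted_cond_deviation) (auto simp: measurable_N)
  also have "\<dots> = 2 powr (1 / p) *
           (\<Sum>v\<in>Vs. \<P>(w in N. V w = v) * \<bar>\<P>(w in N. B w \<bar> V w = v) - \<P>(w in N. B w)\<bar>)"
  proof -
    have "\<P>(w in N. V w = v) * (\<Sum>b\<in>UNIV. \<bar>\<P>(w in N. B w = b \<bar> V w = v) - \<P>(w in N. B w = b)\<bar>)
        = 2 * (\<P>(w in N. V w = v) * \<bar>\<P>(w in N. B w \<bar> V w = v) - \<P>(w in N. B w)\<bar>)" for v
      using N.prob_mult_cond_prob_compl_deviation[OF pred_N]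
      by (simp add: UNIV_bool distrib_left)
    then have "(\<Sum>v\<in>Vs. \<P>(w in N. V w = v) *
          (\<Sum>b\<in>UNIV. \<bar>\<P>(w in N. B w = b \<bar> V w = v) - \<P>(w in N. B w = b)\<bar>))
        = 2 * (\<Sum>v\<in>Vs. \<P>(w in N. V w = v) * \<bar>\<P>(w in N. B w \<bar> V w = v) - \<P>(w in N. B w)\<bar>)"
      by (simp only: sum_distrib_left)
    then show ?thesis by simp
  qed
  also have "\<dots> = 2 powr (1 / p) *
           (\<Sum>v\<in>Vs. \<P>(w in M. V w = v \<bar> C w) *
              \<bar>\<P>(w in M. B w \<bar> C w \<and> V w = v) - \<P>(w in M. B w \<bar> C w)\<bar>)"
    unfolding N_def using assms(3,5)
    by (simp add: measure_uniform_measure_eq_cond_prob cond_prob_uniform_measure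
        del: space_uniform_measure)
  finally show ?thesis .
qed

end

theorem lemma1:
  fixes M :: "'w measure" and A :: "'w \<Rightarrow> 'a" and Y Yh :: "'w \<Rightarrow> 'y"
    and As :: "'a set" and Ys :: "'y set" and p :: real
  assumes "prob_space M"
    and "finite As" and "finite Ys"
    and "A \<in> measurable M (count_space As)"
    and "Y \<in> measurable M (count_space Ys)"
    and "Yh \<in> measurable M (count_space Ys)"
    and "p \<ge> 1"
  shows "(IW M p Ys As Yh A =
           (2 powr (1 / p)) / 2 *
             (\<Sum>a\<in>As. \<P>(w in M. A w = a) *
                (\<Sum>y\<in>Ys. \<bar>\<P>(w in M. Yh w = y \<bar> A w = a) - \<P>(w in M. Yh w = y)\<bar>))) \<and>
         (\<forall>y\<in>Ys. \<P>(w in M. Y w = y) > 0 \<longrightarrow>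
           IW_cond M p (UNIV :: bool set) As (\<lambda>w. Yh w = Y w) A (\<lambda>w. Y w = y) =
           2 powr (1 / p) *
             (\<Sum>a\<in>As. \<P>(w in M. A w = a \<bar> Y w = y) *
                \<bar>\<P>(w in M. Yh w = Y w \<bar> Y w = y \<and> A w = a) - \<P>(w in M. Yh w = Y w \<bar> Y w = y)\<bar>))"
proof -
  interpret prob_space M by fact
  (* p \<ge> 1 makes lp_dist a metric; the computation itself only needs p > 0. *)
  have "p > 0" using \<open>p \<ge> 1\<close> by simp
  have "Measurable.pred M (\<lambda>w. Yh w = Y w)"
    using assms(3,6,5) by (rule pred_eq_finite_valued)
  moreover have "Measurable.pred M (\<lambda>w. Y w = y)" for y
    using assms(5) by (rule pred_eq_const1) simp
  ultimately show ?thesis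
    using assms(2-4,6) \<open>p > 0\<close> IW_eq_weighted_cond_deviation[of Ys As p Yh A]
    by (auto intro!: IW_cond_bool_eq_weighted_cond_deviation)
qed

end
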